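(* Let $K\subseteq\mathbb{R}^n$ be nonempty, compact and convex, let $F:K\to\mathbb{R}^n$ be continuously differentiable and strongly monotone, and let $\delta:K\to\mathbb{R}^n$ be such that $F+\delta$ is continuously differentiable and strongly monotone. Consider the dynamics with state-dependent cost disturbance $$\dot x(t)\in\beta(\tilde\pi(t))-x(t),\qquad \tilde\pi(t)=(F+\delta)(x(t)),\qquad \beta(\pi)=\arg\min_{y\in K}y^T\pi .$$ Then every solution converges to a perturbed equilibrium point $\tilde x^*$ (the solution of $VI(K,F+\delta)$), and there is $\alpha_1\in\mathcal{K}_\infty$ such that $$\|x^*-\tilde x^*\|\le \alpha_1^{-1}\big(h(\tilde x^* )\big),$$ where $x^*$ is the unique solution of the unperturbed variational inequality $VI(K,F)$ and $$h(x)=\max\Big\{(z-x)^T\delta(x):\ z\in\arg\min_{y\in K}y^TF(x)\Big\}.$$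
   Context: A point $x\in K$ solves the variational inequality $VI(K,G)$ for $G:K\to\mathbb{R}^n$ if $(y-x)^TG(x)\ge0$ for all $y\in K$. A map $G$ is strongly monotone on $K$ if there is $c>0$ with $(x-y)^T(G(x)-G(y))\ge c\|x-y\|^2$ for all $x,y\in K$. Solutions of the differential inclusion are Carathéodory solutions with $x(0)\in K$. $\mathcal{K}_\infty$: continuous strictly increasing unbounded functions $[0,\infty)\to[0,\infty)$ vanishing at $0$. *)

theory Defs
  imports "HOL-Analysis.Analysis"
begin

definition solves_VI :: "('a::euclidean_space) set \<Rightarrow> ('a \<Rightarrow> 'a) \<Rightarrow> 'a \<Rightarrow> bool" where
  "solves_VI K G x \<longleftrightarrow> x \<in> K \<and> (\<forall>y\<in>K. (y - x) \<bullet> G x \<ge> 0)"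

definition strongly_monotone_on :: "('a::euclidean_space) set \<Rightarrow> ('a \<Rightarrow> 'a) \<Rightarrow> bool" where
  "strongly_monotone_on K G \<longleftrightarrow>
     (\<exists>c>0. \<forall>x\<in>K. \<forall>y\<in>K. (x - y) \<bullet> (G x - G y) \<ge> c * (norm (x - y))\<^sup>2)"

definition C1_on :: "('a::euclidean_space) set \<Rightarrow> ('a \<Rightarrow> 'a) \<Rightarrow> bool" where
  "C1_on K G \<longleftrightarrow> (\<exists>G'. (\<forall>x\<in>K. (G has_derivative blinfun_apply (G' x)) (at x within K))
                         \<and> continuous_on K G')"

definition best_resp :: "('a::euclidean_space) set \<Rightarrow> 'a \<Rightarrow> 'a set" where
  "best_resp K p = {y \<in> K. \<forall>z\<in>K. y \<bullet> p \<le> z \<bullet> p}"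

definition class_K_inf :: "(real \<Rightarrow> real) \<Rightarrow> bool" where
  "class_K_inf \<alpha> \<longleftrightarrow> continuous_on {0..} \<alpha> \<and> strict_mono_on {0..} \<alpha> \<and> \<alpha> 0 = 0
                      \<and> (\<forall>M. \<exists>t\<ge>0. \<alpha> t > M)"

text \<open>Caratheodory solution on [0,\<infinity>) of  x' \<in> best_resp K (G (x t)) - x t  with x 0 \<in> K:
  x is absolutely continuous on every compact interval, i.e. the integral of a locally
  Lebesgue integrable v, and the inclusion holds for almost every t \<ge> 0.\<close>
definition caratheodory_sol :: "('a::euclidean_space) set \<Rightarrow> ('a \<Rightarrow> 'a) \<Rightarrow> (real \<Rightarrow> 'a) \<Rightarrow> bool" where
  "caratheodory_sol K G x \<longleftrightarrow> x 0 \<in> K \<and>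
     (\<exists>v. (\<forall>T\<ge>0. v absolutely_integrable_on {0..T}) \<and>
          (\<forall>t\<ge>0. x t = x 0 + integral {0..t} v) \<and>
          (\<exists>N. negligible N \<and> (\<forall>t\<in>{0..} - N. v t \<in> (\<lambda>b. b - x t) ` best_resp K (G (x t)))))"

definition hfun :: "('a::euclidean_space) set \<Rightarrow> ('a \<Rightarrow> 'a) \<Rightarrow> ('a \<Rightarrow> 'a) \<Rightarrow> 'a \<Rightarrow> real" where
  "hfun K F \<delta> x = Sup ((\<lambda>z. (z - x) \<bullet> \<delta> x) ` best_resp K (F x))"

end

theory Submission
  imports Defs
begin

(* Existence of the perturbed equilibrium xt follows from Brouwer's theorem applied to
  x |-> proj_K (x - G x), where G = F + delta.  Along a solution, the gap function
  phi(x) = x . G x - min_{y in K} y . G x satisfies phi' <= -phi in the integrated form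
  phi(t) - phi(s) + int_s^t phi <= 0: a backward difference quotient of phi is bounded using the
  best response at the later time as a feasible point at the earlier time (a Danskin-type
  estimate) and monotonicity of G, with an error that vanishes in L1 by Lebesgue differentiation.
  Hence phi(x(t)) -> 0, and c ||x - xt||^2 <= phi(x) by strong monotonicity.
  For the bound, the two variational inequalities and strong monotonicity of F give
  c ||x* - xt||^2 <= (z - xt) . delta(xt) <= h(xt) for any best response z to F(xt), so
  alpha_1(r) = c r^2 works. *)

section \<open>Existence of equilibria and the distance bound\<close>

lemma C1_on_imp_lipschitz_on:
  assumes "C1_on K G" "compact K" "convex K"
  obtains L where "L-lipschitz_on K G"
proof -
  obtain G' where G': "\<And>x. x \<in> K \<Longrightarrow> (G has_derivative blinfun_apply (G' x)) (at x within K)"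
    and "continuous_on K G'"
    using assms(1) unfolding C1_on_def by blast
  then have "bounded (G' ` K)"
    by (intro compact_imp_bounded compact_continuous_image assms(2))
  then obtain B where "\<And>x. x \<in> K \<Longrightarrow> norm (G' x) \<le> B"
    unfolding bounded_iff by blast
  then have "(max B 0)-lipschitz_on K G"
    by (intro bounded_derivative_imp_lipschitz[OF G' assms(3)])
      (auto simp: norm_blinfun.rep_eq intro: max.coboundedI1)
  then show thesis by (rule that)
qed

lemma solves_VI_exists:
  fixes K :: "'a::euclidean_space set"
  assumes "K \<noteq> {}" "compact K" "convex K" "continuous_on K G"
  obtains x where "solves_VI K G x"
proof -
  have "closed K" using assms(2) compact_imp_closed by blast
  let ?P = "\<lambda>x. closest_point K (x - G x)"
  have "continuous_on K ?P"
    by (rule continuous_on_compose2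
        [OF continuous_on_closest_point[OF assms(3) \<open>closed K\<close> assms(1)]])
      (auto intro!: continuous_intros assms(4))
  moreover have "?P \<in> K \<rightarrow> K" using closest_point_in_set[OF \<open>closed K\<close> assms(1)] by blast
  ultimately obtain x where x: "x \<in> K" "?P x = x"
    using brouwer[OF assms(2,3,1)] by blast
  have "(y - x) \<bullet> G x \<ge> 0" if "y \<in> K" for y
    using closest_point_dot[OF assms(3) \<open>closed K\<close> that, of "x - G x"] x(2)
    by (simp add: inner_commute)
  with x(1) show thesis by (intro that[of x]) (simp add: solves_VI_def)
qed

lemma best_resp_nonempty:
  fixes K :: "'a::euclidean_space set"
  assumes "K \<noteq> {}" "compact K"
  obtains y where "y \<in> best_resp K p"
proof -
  have "continuous_on K (\<lambda>y. y \<bullet> p)" by (intro continuous_intros)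
  with continuous_attains_inf[OF assms(2,1)] obtain y where "y \<in> K" "\<forall>z\<in>K. y \<bullet> p \<le> z \<bullet> p"
    by blast
  then show thesis by (intro that) (simp add: best_resp_def)
qed

lemma strongly_monotone_onE:
  assumes "strongly_monotone_on K G"
  obtains c where "c > 0" "\<And>x y. x \<in> K \<Longrightarrow> y \<in> K \<Longrightarrow> c * (norm (x - y))\<^sup>2 \<le> (x - y) \<bullet> (G x - G y)"
  using assms unfolding strongly_monotone_on_def by blast

lemma hfun_ge_distance_of_VI_solutions:
  fixes K :: "'a::euclidean_space set"
  assumes "K \<noteq> {}" "compact K"
    and c: "\<And>x y. x \<in> K \<Longrightarrow> y \<in> K \<Longrightarrow> c * (norm (x - y))\<^sup>2 \<le> (x - y) \<bullet> (F x - F y)"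
    and xs: "solves_VI K F xs" and xt: "solves_VI K (\<lambda>x. F x + \<delta> x) xt"
  shows "c * (norm (xs - xt))\<^sup>2 \<le> hfun K F \<delta> xt"
proof -
  obtain z where z: "z \<in> best_resp K (F xt)" using best_resp_nonempty[OF assms(1,2)] .
  have "z \<in> K" "z \<bullet> F xt \<le> xs \<bullet> F xt" using z xs by (auto simp: best_resp_def solves_VI_def)
  moreover have "xt \<in> K" "0 \<le> (z - xt) \<bullet> (F xt + \<delta> xt)" "0 \<le> (xt - xs) \<bullet> F xs"
    using xt xs \<open>z \<in> K\<close> by (auto simp: solves_VI_def)
  moreover have "c * (norm (xt - xs))\<^sup>2 \<le> (xt - xs) \<bullet> (F xt - F xs)"
    using c xs \<open>xt \<in> K\<close> by (simp add: solves_VI_def)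
  ultimately have "c * (norm (xs - xt))\<^sup>2 \<le> (z - xt) \<bullet> \<delta> xt"
    by (simp add: inner_simps norm_minus_commute)
  also have "\<dots> \<le> hfun K F \<delta> xt"
    unfolding hfun_def
  proof (rule cSup_upper[OF imageI[OF z]])
    have "bounded ((\<lambda>z. (z - xt) \<bullet> \<delta> xt) ` K)"
      by (intro compact_imp_bounded compact_continuous_image assms(2) continuous_intros)
    then show "bdd_above ((\<lambda>z. (z - xt) \<bullet> \<delta> xt) ` best_resp K (F xt))"
      by (rule bdd_above_mono[OF bounded_imp_bdd_above]) (auto simp: best_resp_def)
  qed
  finally show ?thesis .
qed

lemma class_K_inf_scaled_square:
  fixes c :: real
  assumes "c > 0"
  shows "class_K_inf (\<lambda>r. c * r\<^sup>2)"
  unfolding class_K_inf_def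
proof (intro conjI allI)
  show "continuous_on {0..} (\<lambda>r. c * r\<^sup>2)" by (intro continuous_intros)
  show "strict_mono_on {0..} (\<lambda>r. c * r\<^sup>2)"
  proof (rule strict_mono_onI)
    fix r s :: real
    assume "r \<in> {0..}" "r < s"
    then show "c * r\<^sup>2 < c * s\<^sup>2" using assms by (simp add: power_strict_mono)
  qed
  fix M :: real
  have "c * (sqrt ((\<bar>M\<bar> + 1) / c))\<^sup>2 = \<bar>M\<bar> + 1" using assms by simp
  then show "\<exists>t\<ge>0. M < c * t\<^sup>2"
    using assms by (intro exI[of _ "sqrt ((\<bar>M\<bar> + 1) / c)"]) auto
qed simp

lemma le_inv_into_scaled_square:
  fixes c r y :: real
  assumes "c > 0" "r \<ge> 0" "c * r\<^sup>2 \<le> y"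
  shows "r \<le> inv_into {0..} (\<lambda>r. c * r\<^sup>2) y"
proof -
  have "0 \<le> c * r\<^sup>2" using assms(1) by simp
  with assms(3) have "y \<ge> 0" by linarith
  then have "y = c * (sqrt (y / c))\<^sup>2" using assms(1) by simp
  then have y: "y \<in> (\<lambda>r. c * r\<^sup>2) ` {0..}"
    by (rule image_eqI) (use \<open>y \<ge> 0\<close> assms(1) in simp)
  define r' where "r' = inv_into {0..} (\<lambda>r. c * r\<^sup>2) y"
  have "r' \<ge> 0" "c * r'\<^sup>2 = y"
    using inv_into_into[OF y] f_inv_into_f[OF y] by (auto simp: r'_def)
  with assms(3) have "c * r\<^sup>2 \<le> c * r'\<^sup>2" by simp
  with assms(1) have "r\<^sup>2 \<le> r'\<^sup>2" by simp
  from this \<open>r' \<ge> 0\<close> show ?thesis unfolding r'_def by (rule power2_le_imp_le)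
qed

lemma VI_solution_distance_bound:
  fixes K :: "'a::euclidean_space set"
  assumes "K \<noteq> {}" "compact K" "strongly_monotone_on K F"
    and "solves_VI K (\<lambda>x. F x + \<delta> x) xt"
  obtains \<alpha> where "class_K_inf \<alpha>"
    "\<And>xs. solves_VI K F xs \<Longrightarrow> norm (xs - xt) \<le> inv_into {0..} \<alpha> (hfun K F \<delta> xt)"
proof -
  obtain c where "c > 0"
    and c: "\<And>x y. x \<in> K \<Longrightarrow> y \<in> K \<Longrightarrow> c * (norm (x - y))\<^sup>2 \<le> (x - y) \<bullet> (F x - F y)"
    using strongly_monotone_onE[OF assms(3)] by blast
  show thesis
  proof (rule that[OF class_K_inf_scaled_square[OF \<open>c > 0\<close>]])
    fix xs assume "solves_VI K F xs"
    show "norm (xs - xt) \<le> inv_into {0..} (\<lambda>r. c * r\<^sup>2) (hfun K F \<delta> xt)"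
      by (rule le_inv_into_scaled_square[OF \<open>c > 0\<close> norm_ge_zero
          hfun_ge_distance_of_VI_solutions[OF assms(1,2) c \<open>solves_VI K F xs\<close> assms(4)]])
  qed
qed

section \<open>Backward difference quotients and dissipation\<close>

lemma integral_le_negligible:
  fixes f g :: "'a::euclidean_space \<Rightarrow> real"
  assumes "f integrable_on S" "g integrable_on S" "negligible N"
    and "\<And>x. x \<in> S - N \<Longrightarrow> f x \<le> g x"
  shows "integral S f \<le> integral S g"
proof -
  define g' where "g' x = (if x \<in> N then f x else g x)" for x
  have "integral S g = integral S g'"
    by (rule integral_spike[OF assms(3)]) (simp add: g'_def)
  moreover have "g' integrable_on S"
    by (rule integrable_spike[OF assms(2,3)]) (simp add: g'_def)
  then have "integral S f \<le> integral S g'"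
    by (rule integral_le[OF assms(1)]) (use assms(4) in \<open>auto simp: g'_def\<close>)
  ultimately show ?thesis by simp
qed

lemma backward_average_tendsto_ae:
  fixes w :: "real \<Rightarrow> 'a::euclidean_space"
  assumes "\<And>a b. w integrable_on {a..b}"
  obtains N where "negligible N"
    "\<And>\<tau>. \<tau> \<notin> N \<Longrightarrow> ((\<lambda>h. integral {\<tau> - h..\<tau>} w /\<^sub>R h) \<longlongrightarrow> w \<tau>) (at_right 0)"
proof -
  \<comment> \<open>The library averages over forward boxes [y, y + h]; reflection turns them into backward ones.\<close>
  let ?W = "\<lambda>y. w (- y)"
  have "?W integrable_on cbox a b" for a b
    using Henstock_Kurzweil_Integration.integrable_reflect_real[where f=w and a="- b" and b="- a"] assms
    by simp
  then obtain N where N: "negligible N"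
    "\<And>y e. y \<notin> N \<Longrightarrow> 0 < e \<Longrightarrow> \<exists>d>0. \<forall>h. 0 < h \<and> h < d \<longrightarrow>
        norm (integral (cbox y (y + h *\<^sub>R One)) ?W /\<^sub>R h ^ DIM(real) - ?W y) < e"
    using integrable_ccontinuous_explicit[of ?W] by blast
  have "negligible (uminus ` N)"
    by (rule negligible_differentiable_image_negligible[OF _ N(1)]) (auto intro!: derivative_intros)
  then show thesis
  proof (rule that)
    fix \<tau> :: real
    assume "\<tau> \<notin> uminus ` N"
    then have "- \<tau> \<notin> N" by force
    have reflect: "integral {- \<tau>..h - \<tau>} ?W = integral {\<tau> - h..\<tau>} w" for h
      using Henstock_Kurzweil_Integration.integral_reflect_real[where f=w and a="\<tau> - h" and b=\<tau>]
      by simp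
    show "((\<lambda>h. integral {\<tau> - h..\<tau>} w /\<^sub>R h) \<longlongrightarrow> w \<tau>) (at_right 0)"
    proof (rule tendstoI)
      fix e :: real
      assume "0 < e"
      with N(2)[OF \<open>- \<tau> \<notin> N\<close>] obtain d where "d > 0"
        and d: "\<forall>h. 0 < h \<and> h < d \<longrightarrow> norm (integral {\<tau> - h..\<tau>} w /\<^sub>R h - w \<tau>) < e"
        by (auto simp: reflect)
      show "\<forall>\<^sub>F h in at_right 0. dist (integral {\<tau> - h..\<tau>} w /\<^sub>R h) (w \<tau>) < e"
        using eventually_at_right_real[OF \<open>d > 0\<close>] by eventually_elim (simp add: d dist_norm)
    qed
  qed
qed

lemma continuous_on_backward_integral:
  fixes w :: "real \<Rightarrow> 'a::euclidean_space"
  assumes "\<And>a b. w integrable_on {a..b}" "0 \<le> h"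
  shows "continuous_on {a..b} (\<lambda>\<tau>. integral {\<tau> - h..\<tau>} w)"
proof -
  define I where "I u = integral {a - h..u} w" for u
  have I: "continuous_on {a - h..b} I"
    unfolding I_def by (rule indefinite_integral_continuous_1[OF assms(1)])
  have "continuous_on {a..b} (\<lambda>\<tau>. I \<tau> - I (\<tau> - h))"
    by (intro continuous_intros continuous_on_subset[OF I] continuous_on_compose2[OF I])
      (use assms(2) in auto)
  moreover have "I \<tau> - I (\<tau> - h) = integral {\<tau> - h..\<tau>} w" if "\<tau> \<in> {a..b}" for \<tau>
    using Henstock_Kurzweil_Integration.integral_combine[of "a - h" "\<tau> - h" \<tau> w] that assms
    by (simp add: I_def) (metis add_diff_cancel_left')
  ultimately show ?thesis by (rule continuous_on_eq)
qed

lemma norm_backward_average_le: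
  fixes w :: "real \<Rightarrow> 'a::euclidean_space"
  assumes "\<And>a b. w integrable_on {a..b}" "\<And>\<tau>. norm (w \<tau>) \<le> B" "0 < h"
  shows "norm (integral {\<tau> - h..\<tau>} w /\<^sub>R h) \<le> B"
proof -
  have "norm (integral {\<tau> - h..\<tau>} w) \<le> integral {\<tau> - h..\<tau>} (\<lambda>_. B)"
    by (rule integral_norm_bound_integral) (use assms in auto)
  then show ?thesis using assms(3) by (simp add: field_simps)
qed

lemma norm_backward_average_error_le:
  fixes w :: "real \<Rightarrow> 'a::euclidean_space"
  assumes "\<And>a b. w integrable_on {a..b}" "\<And>\<tau>. norm (w \<tau>) \<le> B" "0 < h"
  shows "norm (integral {\<tau> - h..\<tau>} w /\<^sub>R h - w \<tau>) \<le> 2 * B"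
  using norm_backward_average_le[OF assms, of \<tau>] assms(2)[of \<tau>]
    norm_triangle_ineq4[of "integral {\<tau> - h..\<tau>} w /\<^sub>R h" "w \<tau>"] by linarith

lemma integrable_backward_average_error:
  fixes w :: "real \<Rightarrow> 'a::euclidean_space"
  assumes "\<And>a b. w integrable_on {a..b}" "\<And>\<tau>. norm (w \<tau>) \<le> B" "0 < h"
  shows "(\<lambda>\<tau>. norm (integral {\<tau> - h..\<tau>} w /\<^sub>R h - w \<tau>)) integrable_on {a..b}"
proof -
  have "(\<lambda>\<tau>. integral {\<tau> - h..\<tau>} w /\<^sub>R h - w \<tau>) absolutely_integrable_on {a..b}"
  proof (rule absolutely_integrable_integrable_bound)
    show "(\<lambda>\<tau>. integral {\<tau> - h..\<tau>} w /\<^sub>R h - w \<tau>) integrable_on {a..b}"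
    proof (rule integrable_diff[OF integrable_continuous_interval assms(1)])
      show "continuous_on {a..b} (\<lambda>\<tau>. integral {\<tau> - h..\<tau>} w /\<^sub>R h)"
        using assms by (intro continuous_intros continuous_on_backward_integral) auto
    qed
    show "norm (integral {\<tau> - h..\<tau>} w /\<^sub>R h - w \<tau>) \<le> 2 * B" for \<tau>
      by (rule norm_backward_average_error_le[OF assms])
  qed auto
  then show ?thesis by (simp add: absolutely_integrable_on_def)
qed

lemma integral_backward_average_error_tendsto_0:
  fixes w :: "real \<Rightarrow> 'a::euclidean_space"
  assumes w: "\<And>a b. w integrable_on {a..b}" and B: "\<And>\<tau>. norm (w \<tau>) \<le> B"
  shows "((\<lambda>h. integral {a..b} (\<lambda>\<tau>. norm (integral {\<tau> - h..\<tau>} w /\<^sub>R h - w \<tau>))) \<longlongrightarrow> 0)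
           (at_right 0)"
proof -
  obtain N where N: "negligible N"
    and lim: "\<And>\<tau>. \<tau> \<notin> N \<Longrightarrow> ((\<lambda>h. integral {\<tau> - h..\<tau>} w /\<^sub>R h) \<longlongrightarrow> w \<tau>) (at_right 0)"
    using backward_average_tendsto_ae[OF w] by metis
  let ?e = "\<lambda>h \<tau>. norm (integral {\<tau> - h..\<tau>} w /\<^sub>R h - w \<tau>)"
  show ?thesis
  proof (rule tendsto_at_right_sequentially[of 0 1])
    fix S :: "nat \<Rightarrow> real"
    assume S: "\<And>n. 0 < S n" "S \<longlonglongrightarrow> 0"
    define f where "f n \<tau> = (if \<tau> \<in> N then 0 else ?e (S n) \<tau>)" for n \<tau>
    have "(\<lambda>n. integral {a..b} (f n)) \<longlonglongrightarrow> integral {a..b} (\<lambda>_. 0::real)"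
    proof (rule dominated_convergence(2)[where h="\<lambda>_. 2 * B"])
      show "f n integrable_on {a..b}" for n
        unfolding f_def
        by (rule integrable_spike[OF integrable_backward_average_error[OF w B S(1)] N]) auto
      have "0 \<le> B" using B[of 0] by (meson norm_ge_zero order_trans)
      then show "norm (f n \<tau>) \<le> 2 * B" for n \<tau>
        using norm_backward_average_error_le[OF w B S(1)] by (auto simp: f_def)
      show "(\<lambda>n. f n \<tau>) \<longlonglongrightarrow> 0" for \<tau>
      proof (cases "\<tau> \<in> N")
        case False
        have "filterlim S (at_right 0) sequentially"
          using S by (intro tendsto_imp_filterlim_at_right) auto
        with lim[OF False] have "(\<lambda>n. integral {\<tau> - S n..\<tau>} w /\<^sub>R S n) \<longlonglongrightarrow> w \<tau>"
          by (rule filterlim_compose)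
        then have "(\<lambda>n. ?e (S n) \<tau>) \<longlonglongrightarrow> norm (w \<tau> - w \<tau>)"
          by (intro tendsto_intros)
        then show ?thesis using False by (simp add: f_def)
      qed (simp add: f_def)
    qed (rule integrable_const_ivl)
    moreover have "integral {a..b} (f n) = integral {a..b} (?e (S n))" for n
      unfolding f_def by (rule integral_spike[OF N]) auto
    ultimately show "(\<lambda>n. integral {a..b} (?e (S n))) \<longlonglongrightarrow> 0" by simp
  qed simp
qed

lemma backward_quotient_tendsto_deriv:
  fixes f :: "real \<Rightarrow> real"
  assumes "(f has_real_derivative D) (at u)"
  shows "((\<lambda>h. (f u - f (u - h)) / h) \<longlongrightarrow> D) (at_right 0)"
proof -
  have "((\<lambda>y. (f y - f u) / (y - u)) \<longlongrightarrow> D) (at u)"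
    using assms by (simp add: has_field_derivative_iff)
  moreover have "filterlim (\<lambda>h. u - h) (at u) (at_right 0)"
    unfolding filterlim_at by (auto simp: eventually_at_filter intro!: tendsto_eq_intros)
  ultimately have "((\<lambda>h. (f (u - h) - f u) / (u - h - u)) \<longlongrightarrow> D) (at_right 0)"
    by (rule filterlim_compose)
  moreover have "(f (u - h) - f u) / (u - h - u) = (f u - f (u - h)) / h" for h
    by (simp add: field_split_simps)
  ultimately show ?thesis by simp
qed

lemma has_real_derivative_integral_from_0:
  fixes \<phi> :: "real \<Rightarrow> real"
  assumes "continuous_on {0..} \<phi>" "0 < u"
  shows "((\<lambda>u. integral {0..u} \<phi>) has_real_derivative \<phi> u) (at u)"
proof -
  have "continuous_on {0..u + 1} \<phi>" using assms(1) by (rule continuous_on_subset) auto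
  from integral_has_real_derivative[OF this, of u] assms(2)
  have "((\<lambda>u. integral {0..u} \<phi>) has_real_derivative \<phi> u) (at u within {0..u + 1})" by auto
  moreover have "at u within {0..u + 1} = at u" using assms(2) by (intro at_within_Icc_at) auto
  ultimately show ?thesis by simp
qed

lemma has_integral_shift_from_0:
  fixes \<phi> :: "real \<Rightarrow> real"
  assumes "continuous_on {0..} \<phi>" "0 \<le> h" "h < s" "s \<le> t"
  shows "((\<lambda>\<tau>. \<phi> (\<tau> - h)) has_integral (integral {0..t - h} \<phi> - integral {0..s - h} \<phi>)) {s..t}"
proof -
  let ?\<Psi> = "\<lambda>u. integral {0..u} \<phi>"
  have "((\<lambda>\<tau>. ?\<Psi> (\<tau> - h)) has_vector_derivative \<phi> (\<tau> - h)) (at \<tau> within {s..t})"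
    if "\<tau> \<in> {s..t}" for \<tau>
  proof -
    have "(?\<Psi> has_real_derivative \<phi> (\<tau> - h)) (at (\<tau> + (- h)))"
      using has_real_derivative_integral_from_0[OF assms(1), of "\<tau> - h"] that assms(3) by simp
    then have "((\<lambda>\<tau>. ?\<Psi> (\<tau> + (- h))) has_real_derivative \<phi> (\<tau> - h)) (at \<tau>)"
      by (simp only: DERIV_shift)
    then show ?thesis
      by (simp add: has_real_derivative_iff_has_vector_derivative has_vector_derivative_at_within)
  qed
  from fundamental_theorem_of_calculus[OF assms(4) this] show ?thesis by simp
qed

lemma dissipation_inequality:
  fixes \<phi> :: "real \<Rightarrow> real" and q :: "real \<Rightarrow> real \<Rightarrow> real"
  assumes cont: "continuous_on {0..} \<phi>" and st: "0 < s" "s \<le> t" and N: "negligible N"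
    and quot: "\<And>h \<tau>. 0 < h \<Longrightarrow> h < s \<Longrightarrow> \<tau> \<in> {s..t} - N \<Longrightarrow> (\<phi> \<tau> - \<phi> (\<tau> - h)) / h + \<phi> \<tau> \<le> q h \<tau>"
    and q: "\<And>h. 0 < h \<Longrightarrow> h < s \<Longrightarrow> q h integrable_on {s..t}"
    and lim: "((\<lambda>h. integral {s..t} (q h)) \<longlongrightarrow> 0) (at_right 0)"
  shows "\<phi> t - \<phi> s + integral {s..t} \<phi> \<le> 0"
proof -
  define \<Psi> where "\<Psi> u = integral {0..u} \<phi>" for u
  have shifted: "((\<lambda>\<tau>. \<phi> (\<tau> - h)) has_integral (\<Psi> (t - h) - \<Psi> (s - h))) {s..t}"
    if "0 \<le> h" "h < s" for h
    unfolding \<Psi>_def using has_integral_shift_from_0[OF cont that st(2)] .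
  have \<phi>_integral: "(\<phi> has_integral (\<Psi> t - \<Psi> s)) {s..t}" using shifted[of 0] st by simp
  define L where "L h = (\<Psi> t - \<Psi> (t - h)) / h - (\<Psi> s - \<Psi> (s - h)) / h + (\<Psi> t - \<Psi> s)" for h
  have "(L \<longlongrightarrow> \<phi> t - \<phi> s + (\<Psi> t - \<Psi> s)) (at_right 0)"
    unfolding L_def \<Psi>_def using st
    by (intro tendsto_intros backward_quotient_tendsto_deriv
        has_real_derivative_integral_from_0[OF cont]) auto
  moreover have "\<forall>\<^sub>F h in at_right 0. L h \<le> integral {s..t} (q h)"
    using eventually_at_right_real[OF st(1)]
  proof eventually_elim
    case (elim h)
    then have h: "0 < h" "h < s" by auto
    have "((\<Psi> t - \<Psi> s) - (\<Psi> (t - h) - \<Psi> (s - h))) / h + (\<Psi> t - \<Psi> s) = L h"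
      unfolding L_def using h by (simp add: field_simps)
    moreover have "((\<lambda>\<tau>. (\<phi> \<tau> - \<phi> (\<tau> - h)) / h + \<phi> \<tau>) has_integral
        ((\<Psi> t - \<Psi> s) - (\<Psi> (t - h) - \<Psi> (s - h))) / h + (\<Psi> t - \<Psi> s)) {s..t}"
      using h
      by (intro has_integral_add has_integral_divide has_integral_diff \<phi>_integral shifted) auto
    ultimately have L: "((\<lambda>\<tau>. (\<phi> \<tau> - \<phi> (\<tau> - h)) / h + \<phi> \<tau>) has_integral L h) {s..t}" by simp
    then have "integral {s..t} (\<lambda>\<tau>. (\<phi> \<tau> - \<phi> (\<tau> - h)) / h + \<phi> \<tau>) \<le> integral {s..t} (q h)"
      by (intro integral_le_negligible[OF _ q[OF h] N] quot h) (auto intro: has_integral_integrable)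
    then show ?case using L by (simp add: integral_unique)
  qed
  ultimately have "\<phi> t - \<phi> s + (\<Psi> t - \<Psi> s) \<le> 0"
    by (intro tendsto_le[OF trivial_limit_at_right_real lim])
  then show ?thesis using \<phi>_integral by (simp add: integral_unique)
qed

lemma dissipation_tendsto_0:
  fixes \<phi> :: "real \<Rightarrow> real"
  assumes cont: "continuous_on {0..} \<phi>" and nonneg: "\<And>t. 0 \<le> t \<Longrightarrow> 0 \<le> \<phi> t"
    and diss: "\<And>s t. 0 < s \<Longrightarrow> s \<le> t \<Longrightarrow> \<phi> t - \<phi> s + integral {s..t} \<phi> \<le> 0"
  shows "(\<phi> \<longlongrightarrow> 0) at_top"
proof -
  have integrable: "\<phi> integrable_on {s..t}" if "0 \<le> s" for s t
    using that by (intro integrable_continuous_interval continuous_on_subset[OF cont]) auto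
  have antimono: "\<phi> t \<le> \<phi> s" if "0 < s" "s \<le> t" for s t
  proof -
    have "0 \<le> integral {s..t} \<phi>"
      using that by (intro integral_nonneg integrable nonneg) auto
    then show ?thesis using diss[OF that] by linarith
  qed
  have decay: "\<phi> t \<le> \<phi> 1 / t" if "1 \<le> t" for t
  proof -
    have "(t - 1) * \<phi> t = integral {1..t} (\<lambda>_. \<phi> t)" using that by simp
    also have "\<dots> \<le> integral {1..t} \<phi>"
      using that by (intro integral_le integrable antimono) auto
    also have "\<dots> \<le> \<phi> 1 - \<phi> t" using diss[of 1 t] that by linarith
    finally have "t * \<phi> t \<le> \<phi> 1" by (simp add: algebra_simps)
    then show ?thesis using that by (simp add: field_simps)
  qed
  have "\<forall>\<^sub>F t in at_top. 0 \<le> \<phi> t" using nonneg by (rule eventually_at_top_linorderI)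
  moreover have "\<forall>\<^sub>F t in at_top. \<phi> t \<le> \<phi> 1 / t" using decay by (rule eventually_at_top_linorderI)
  moreover have "((\<lambda>t. \<phi> 1 / t) \<longlongrightarrow> 0) at_top"
    by (rule real_tendsto_divide_at_top[OF tendsto_const filterlim_ident])
  ultimately show ?thesis by (rule tendsto_sandwich[OF _ _ tendsto_const])
qed

lemma tendsto_if_scaled_sq_dist_le:
  fixes f :: "'b \<Rightarrow> 'a::real_normed_vector"
  assumes "c > 0" "(g \<longlongrightarrow> 0) F" "\<forall>\<^sub>F t in F. c * (norm (f t - l))\<^sup>2 \<le> g t"
  shows "(f \<longlongrightarrow> l) F"
proof -
  have "\<forall>\<^sub>F t in F. norm (f t - l) \<le> sqrt (g t / c)"
    using assms(3)
  proof eventually_elim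
    case (elim t)
    with assms(1) have "(norm (f t - l))\<^sup>2 \<le> g t / c" by (simp add: field_simps)
    then show ?case by (rule real_le_rsqrt)
  qed
  moreover have "((\<lambda>t. sqrt (g t / c)) \<longlongrightarrow> 0) F"
    using tendsto_real_sqrt[OF tendsto_divide_zero[OF assms(2)]] by simp
  ultimately have "((\<lambda>t. f t - l) \<longlongrightarrow> 0) F" by (rule Lim_null_comparison)
  then show ?thesis by (rule LIM_zero_cancel)
qed

section \<open>Caratheodory trajectories\<close>

lemma continuous_on_atLeast_if_Icc:
  fixes f :: "real \<Rightarrow> 'b::topological_space"
  assumes "\<And>T. continuous_on {a..T} f"
  shows "continuous_on {a..} f"
  unfolding continuous_on_eq_continuous_within
proof
  fix t
  assume "t \<in> {a..}"
  have "at t within {a..} = at t within {a..t + 1}"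
    by (rule at_within_nhd[of _ "{..<t + 1}"]) auto
  moreover have "continuous (at t within {a..t + 1}) f"
    using assms[of "t + 1"] \<open>t \<in> {a..}\<close> by (simp add: continuous_on_eq_continuous_within)
  ultimately show "continuous (at t within {a..}) f" by simp
qed

lemma integrable_on_if_zero_on_negatives:
  fixes w :: "real \<Rightarrow> 'a::euclidean_space"
  assumes "\<And>T. 0 \<le> T \<Longrightarrow> w integrable_on {0..T}" "\<And>\<tau>. \<tau> < 0 \<Longrightarrow> w \<tau> = 0"
  shows "w integrable_on {a..b}"
proof -
  have "w integrable_on {min a 0..0}"
    by (rule integrable_spike_finite[of "{0}" _ _ "\<lambda>_. 0"]) (auto simp: assms(2))
  moreover have "w integrable_on {0..max b 0}" by (rule assms(1)) simp
  ultimately have "w integrable_on {min a 0..max b 0}"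
    by (rule Henstock_Kurzweil_Integration.integrable_combine[rotated 2]) auto
  then show ?thesis by (rule integrable_on_subinterval) auto
qed

lemma caratheodory_solE:
  fixes x :: "real \<Rightarrow> 'a::euclidean_space"
  assumes "caratheodory_sol K G x"
  obtains w N where "negligible N" "\<And>a b. w integrable_on {a..b}"
    "\<And>\<sigma> \<tau>. 0 \<le> \<sigma> \<Longrightarrow> \<sigma> \<le> \<tau> \<Longrightarrow> x \<tau> - x \<sigma> = integral {\<sigma>..\<tau>} w"
    "\<And>\<tau>. 0 \<le> \<tau> \<Longrightarrow> \<tau> \<notin> N \<Longrightarrow> x \<tau> + w \<tau> \<in> best_resp K (G (x \<tau>))"
    "\<And>\<tau>. \<tau> < 0 \<or> \<tau> \<in> N \<Longrightarrow> w \<tau> = 0"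
    "x 0 \<in> K" "continuous_on {0..} x"
proof -
  obtain v N where "x 0 \<in> K" and v: "\<And>T. 0 \<le> T \<Longrightarrow> v absolutely_integrable_on {0..T}"
    and xv: "\<And>t. 0 \<le> t \<Longrightarrow> x t = x 0 + integral {0..t} v" and N: "negligible N"
    and vN: "\<And>t. t \<in> {0..} - N \<Longrightarrow> v t \<in> (\<lambda>b. b - x t) ` best_resp K (G (x t))"
    using assms unfolding caratheodory_sol_def by blast
  define w where "w \<tau> = (if 0 \<le> \<tau> \<and> \<tau> \<notin> N then v \<tau> else 0)" for \<tau>
  have "w integrable_on {0..T}" if "0 \<le> T" for T
  proof (rule integrable_spike[OF _ N])
    show "v integrable_on {0..T}" using v[OF that] by (simp add: absolutely_integrable_on_def)
  qed (simp add: w_def)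
  then have w: "w integrable_on {a..b}" for a b
    by (rule integrable_on_if_zero_on_negatives) (auto simp: w_def)
  have xw: "x t = x 0 + integral {0..t} w" if "0 \<le> t" for t
  proof -
    have "integral {0..t} v = integral {0..t} w" by (rule integral_spike[OF N]) (simp add: w_def)
    then show ?thesis using xv[OF that] by simp
  qed
  have increment: "x \<tau> - x \<sigma> = integral {\<sigma>..\<tau>} w" if "0 \<le> \<sigma>" "\<sigma> \<le> \<tau>" for \<sigma> \<tau>
    using xw[of \<sigma>] xw[of \<tau>] that
      Henstock_Kurzweil_Integration.integral_combine[OF that w[of 0 \<tau>]]
    by (simp add: algebra_simps)
  have cont: "continuous_on {0..} x"
  proof (rule continuous_on_atLeast_if_Icc)
    fix T
    have "continuous_on {0..T} (\<lambda>t. x 0 + integral {0..t} w)"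
      by (intro continuous_intros indefinite_integral_continuous_1 w)
    then show "continuous_on {0..T} x" by (rule continuous_on_eq) (metis atLeastAtMost_iff xw)
  qed
  have best: "x \<tau> + w \<tau> \<in> best_resp K (G (x \<tau>))" if "0 \<le> \<tau>" "\<tau> \<notin> N" for \<tau>
    using vN[of \<tau>] that by (auto simp: w_def)
  have zero: "w \<tau> = 0" if "\<tau> < 0 \<or> \<tau> \<in> N" for \<tau>
    using that by (auto simp: w_def)
  show thesis by (rule that[OF N w increment best zero \<open>x 0 \<in> K\<close> cont])
qed

(* If x(t) were outside K, take a hyperplane a . y = d separating x(t) from K and the last time
  t0 < t at which x is on the side of K.  On (t0, t] the velocity w = (x + w) - x points towards K,
  so a . x does not decrease there, which is absurd. *)
lemma integral_curve_in_convex_set: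
  fixes x w :: "real \<Rightarrow> 'a::euclidean_space"
  assumes K: "closed K" "convex K" and "x 0 \<in> K" and x_cont: "continuous_on {0..} x"
    and w: "\<And>a b. w integrable_on {a..b}"
    and x: "\<And>\<sigma> \<tau>. 0 \<le> \<sigma> \<Longrightarrow> \<sigma> \<le> \<tau> \<Longrightarrow> x \<tau> - x \<sigma> = integral {\<sigma>..\<tau>} w"
    and N: "negligible N" and inward: "\<And>\<tau>. 0 \<le> \<tau> \<Longrightarrow> \<tau> \<notin> N \<Longrightarrow> x \<tau> + w \<tau> \<in> K"
    and "0 \<le> t"
  shows "x t \<in> K"
proof (rule ccontr)
  assume "x t \<notin> K"
  then obtain a d where ad: "a \<bullet> x t < d" "\<And>y. y \<in> K \<Longrightarrow> d < a \<bullet> y"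
    using separating_hyperplane_closed_point[OF K(2,1)] by blast
  define u where "u \<tau> = d - a \<bullet> x \<tau>" for \<tau>
  have "u t > 0" "u 0 < 0" using ad \<open>x 0 \<in> K\<close> by (auto simp: u_def)
  define S where "S = {0..t} \<inter> u -` {..0}"
  have "closed S"
    unfolding S_def u_def
    by (intro continuous_closed_preimage continuous_intros continuous_on_subset[OF x_cont]) auto
  moreover have "0 \<in> S" "bdd_above S" using \<open>u 0 < 0\<close> \<open>0 \<le> t\<close> by (auto simp: S_def)
  ultimately have "Sup S \<in> S" by (intro closed_contains_Sup) auto
  define t0 where "t0 = Sup S"
  have t0: "0 \<le> t0" "t0 < t" "u t0 \<le> 0"
    using \<open>Sup S \<in> S\<close> \<open>u t > 0\<close> by (auto simp: S_def t0_def less_le)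
  have positive: "u \<tau> > 0" if "t0 < \<tau>" "\<tau> \<le> t" for \<tau>
    using cSup_upper[OF _ \<open>bdd_above S\<close>, of \<tau>] that t0 by (force simp: S_def t0_def)
  have "a \<bullet> w \<tau> \<ge> 0" if "\<tau> \<in> {t0..t} - (N \<union> {t0})" for \<tau>
  proof -
    have "d < a \<bullet> (x \<tau> + w \<tau>)" using that t0 by (intro ad(2) inward) auto
    then show ?thesis using positive[of \<tau>] that by (auto simp: u_def inner_add_right)
  qed
  moreover have "(\<lambda>\<tau>. a \<bullet> w \<tau>) integrable_on {t0..t}"
    using integrable_linear[OF w bounded_linear_inner_right] by (simp add: o_def)
  ultimately have "integral {t0..t} (\<lambda>_. 0) \<le> integral {t0..t} (\<lambda>\<tau>. a \<bullet> w \<tau>)"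
    by (intro integral_le_negligible[where N="N \<union> {t0}"] integrable_0) (use N in auto)
  also have "\<dots> = a \<bullet> (x t - x t0)"
    using x[OF t0(1) less_imp_le[OF t0(2)]] integral_linear[OF w bounded_linear_inner_right]
    by (simp add: o_def)
  finally have "u t \<le> u t0" by (simp add: u_def inner_diff_right)
  then show False using \<open>u t > 0\<close> t0(3) by simp
qed

lemma caratheodory_sol_compact_convexE:
  fixes K :: "'a::euclidean_space set"
  assumes sol: "caratheodory_sol K G x" and K: "compact K" "convex K"
  obtains w N B where "negligible N" "\<And>a b. w integrable_on {a..b}" "\<And>\<tau>. norm (w \<tau>) \<le> B"
    "\<And>\<sigma> \<tau>. 0 \<le> \<sigma> \<Longrightarrow> \<sigma> \<le> \<tau> \<Longrightarrow> x \<tau> - x \<sigma> = integral {\<sigma>..\<tau>} w"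
    "\<And>\<tau>. 0 \<le> \<tau> \<Longrightarrow> \<tau> \<notin> N \<Longrightarrow> x \<tau> + w \<tau> \<in> best_resp K (G (x \<tau>))"
    "\<And>t. 0 \<le> t \<Longrightarrow> x t \<in> K" "continuous_on {0..} x"
proof -
  obtain N w where N: "negligible N" and w: "\<And>a b. w integrable_on {a..b}"
    and incr: "\<And>\<sigma> \<tau>. 0 \<le> \<sigma> \<Longrightarrow> \<sigma> \<le> \<tau> \<Longrightarrow> x \<tau> - x \<sigma> = integral {\<sigma>..\<tau>} w"
    and best: "\<And>\<tau>. 0 \<le> \<tau> \<Longrightarrow> \<tau> \<notin> N \<Longrightarrow> x \<tau> + w \<tau> \<in> best_resp K (G (x \<tau>))"
    and zero: "\<And>\<tau>. \<tau> < 0 \<or> \<tau> \<in> N \<Longrightarrow> w \<tau> = 0"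
    and "x 0 \<in> K" and x_cont: "continuous_on {0..} x"
    by (rule caratheodory_solE[OF sol]) blast
  have xK: "x t \<in> K" if "0 \<le> t" for t
    by (rule integral_curve_in_convex_set[OF compact_imp_closed[OF K(1)] K(2) \<open>x 0 \<in> K\<close> x_cont
          w incr N _ that]) (use best in \<open>auto simp: best_resp_def\<close>)
  obtain R where R: "\<And>y. y \<in> K \<Longrightarrow> norm y \<le> R"
    using compact_imp_bounded[OF K(1)] unfolding bounded_iff by blast
  have w_bound: "norm (w \<tau>) \<le> 2 * R" for \<tau>
  proof (cases "0 \<le> \<tau> \<and> \<tau> \<notin> N")
    case True
    then have "norm (x \<tau> + w \<tau>) \<le> R" "norm (x \<tau>) \<le> R"
      using best xK R by (auto simp: best_resp_def)
    then show ?thesis using norm_triangle_ineq4[of "x \<tau> + w \<tau>" "x \<tau>"] by simp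
  next
    case False
    then have "w \<tau> = 0" using zero by auto
    moreover have "0 \<le> R" using R[OF \<open>x 0 \<in> K\<close>] by (meson norm_ge_zero order_trans)
    ultimately show ?thesis by simp
  qed
  show thesis by (rule that[OF N w w_bound incr best xK x_cont])
qed

section \<open>The gap function as a Lyapunov function\<close>

definition min_cost :: "'a::real_inner set \<Rightarrow> 'a \<Rightarrow> real" where
  "min_cost K p = (INF y\<in>K. y \<bullet> p)"

definition vi_gap :: "'a::real_inner set \<Rightarrow> ('a \<Rightarrow> 'a) \<Rightarrow> 'a \<Rightarrow> real" where
  "vi_gap K G x = x \<bullet> G x - min_cost K (G x)"

lemma min_cost_le:
  fixes K :: "'a::euclidean_space set"
  assumes "compact K" "y \<in> K"
  shows "min_cost K p \<le> y \<bullet> p"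
proof -
  have "bdd_below ((\<lambda>y. y \<bullet> p) ` K)"
    by (intro bounded_imp_bdd_below compact_imp_bounded compact_continuous_image assms(1)
        continuous_intros)
  then show ?thesis unfolding min_cost_def by (rule cInf_lower[OF imageI[OF assms(2)]])
qed

lemma min_cost_eq_best_resp:
  assumes "y \<in> best_resp K p"
  shows "min_cost K p = y \<bullet> p"
  using assms unfolding min_cost_def best_resp_def by (intro cInf_eq_minimum) auto

lemma continuous_on_min_cost:
  fixes K :: "'a::euclidean_space set"
  assumes "K \<noteq> {}" "compact K"
  shows "continuous_on UNIV (min_cost K)"
proof -
  obtain R where "R > 0" and R: "\<And>y. y \<in> K \<Longrightarrow> norm y \<le> R"
    using compact_imp_bounded[OF assms(2)] unfolding bounded_pos by blast
  have "min_cost K p - min_cost K q \<le> R * norm (p - q)" for p q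
  proof -
    obtain y where y: "y \<in> best_resp K q" using best_resp_nonempty[OF assms] .
    then have "y \<in> K" by (simp add: best_resp_def)
    have "min_cost K p \<le> y \<bullet> p" by (rule min_cost_le[OF assms(2) \<open>y \<in> K\<close>])
    also have "\<dots> = min_cost K q + y \<bullet> (p - q)"
      using min_cost_eq_best_resp[OF y] by (simp add: inner_diff_right)
    also have "y \<bullet> (p - q) \<le> R * norm (p - q)"
      using norm_cauchy_schwarz[of y "p - q"] R[OF \<open>y \<in> K\<close>]
      by (meson mult_right_mono norm_ge_zero order_trans)
    finally show ?thesis by simp
  qed
  then have "R-lipschitz_on UNIV (min_cost K)"
    using \<open>R > 0\<close>
    by (intro lipschitz_onI) (force simp: dist_real_def dist_norm abs_le_iff norm_minus_commute)+
  then show ?thesis by (rule lipschitz_on_continuous_on)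
qed

lemma continuous_on_vi_gap:
  fixes K :: "'a::euclidean_space set"
  assumes "K \<noteq> {}" "compact K" "continuous_on S G"
  shows "continuous_on S (vi_gap K G)"
  unfolding vi_gap_def
  by (intro continuous_intros assms(3)
      continuous_on_compose2[OF continuous_on_min_cost[OF assms(1,2)]]) auto

lemma vi_gap_ge_sq_dist:
  fixes K :: "'a::euclidean_space set"
  assumes "compact K" and c: "\<And>x y. x \<in> K \<Longrightarrow> y \<in> K \<Longrightarrow> c * (norm (x - y))\<^sup>2 \<le> (x - y) \<bullet> (G x - G y)"
    and xt: "solves_VI K G xt" and "z \<in> K"
  shows "c * (norm (z - xt))\<^sup>2 \<le> vi_gap K G z"
proof -
  have "xt \<in> K" "0 \<le> (z - xt) \<bullet> G xt" using xt \<open>z \<in> K\<close> by (auto simp: solves_VI_def)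
  moreover have "min_cost K (G z) \<le> xt \<bullet> G z" by (rule min_cost_le[OF assms(1) \<open>xt \<in> K\<close>])
  moreover have "c * (norm (z - xt))\<^sup>2 \<le> (z - xt) \<bullet> (G z - G xt)" using c \<open>z \<in> K\<close> \<open>xt \<in> K\<close> .
  ultimately show ?thesis by (simp add: vi_gap_def inner_diff_left inner_diff_right)
qed

(* A Danskin-type estimate: the best response b at u is feasible at u', which controls the change
  of the gap; the quadratic remainder has the sign of (u - u') . (G u - G u'). *)
lemma vi_gap_backward_quotient_le:
  fixes K :: "'a::euclidean_space set"
  assumes "compact K" "b \<in> best_resp K (G u)" "0 < h" "0 \<le> (u - u') \<bullet> (G u - G u')"
  shows "(vi_gap K G u - vi_gap K G u') / h + vi_gap K G u
           \<le> ((u - u') /\<^sub>R h - (b - u)) \<bullet> ((G u - G u') /\<^sub>R h + G u)"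
proof -
  let ?m = "(u - u') \<bullet> (G u - G u')"
  have "b \<in> K" using assms(2) by (simp add: best_resp_def)
  have "vi_gap K G u = (u - b) \<bullet> G u"
    using min_cost_eq_best_resp[OF assms(2)] by (simp add: vi_gap_def inner_diff_left)
  moreover have "(u' - b) \<bullet> G u' \<le> vi_gap K G u'"
    using min_cost_le[OF assms(1) \<open>b \<in> K\<close>] by (simp add: vi_gap_def inner_diff_left)
  moreover have "((u - u') /\<^sub>R h - (b - u)) \<bullet> ((G u - G u') /\<^sub>R h + G u)
      = ((u - b) \<bullet> G u - (u' - b) \<bullet> G u') / h + (u - b) \<bullet> G u + ?m / h\<^sup>2 + ?m / h"
    using assms(3) by (simp add: inner_simps field_simps power2_eq_square)
  moreover have "0 \<le> ?m / h\<^sup>2 + ?m / h" using assms(3,4) by simp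
  ultimately show ?thesis using assms(3) by (smt (verit) divide_right_mono)
qed

lemma vi_gap_backward_quotient_le_norm:
  fixes K :: "'a::euclidean_space set"
  assumes "compact K" and lip: "L-lipschitz_on K G" and P: "\<And>y. y \<in> K \<Longrightarrow> norm (G y) \<le> P"
    and "u \<in> K" "u' \<in> K" "u + v \<in> best_resp K (G u)" "0 < h"
    and "0 \<le> (u - u') \<bullet> (G u - G u')" "norm ((u - u') /\<^sub>R h) \<le> B"
  shows "(vi_gap K G u - vi_gap K G u') / h + vi_gap K G u
           \<le> (L * B + P) * norm ((u - u') /\<^sub>R h - v)"
proof -
  have "norm ((G u - G u') /\<^sub>R h) \<le> L * norm ((u - u') /\<^sub>R h)"
    using lipschitz_on_normD[OF lip \<open>u \<in> K\<close> \<open>u' \<in> K\<close>] \<open>0 < h\<close> by (simp add: divide_right_mono)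
  also have "\<dots> \<le> L * B"
    using \<open>norm ((u - u') /\<^sub>R h) \<le> B\<close> lipschitz_on_nonneg[OF lip] by (rule mult_left_mono)
  finally have G_bound: "norm ((G u - G u') /\<^sub>R h + G u) \<le> L * B + P"
    using P[OF \<open>u \<in> K\<close>] norm_triangle_ineq[of "(G u - G u') /\<^sub>R h" "G u"] by simp
  have "(vi_gap K G u - vi_gap K G u') / h + vi_gap K G u
      \<le> ((u - u') /\<^sub>R h - v) \<bullet> ((G u - G u') /\<^sub>R h + G u)"
    using vi_gap_backward_quotient_le[OF assms(1,6,7,8)] by simp
  also have "\<dots> \<le> norm ((u - u') /\<^sub>R h - v) * norm ((G u - G u') /\<^sub>R h + G u)"
    by (rule norm_cauchy_schwarz)
  also have "\<dots> \<le> norm ((u - u') /\<^sub>R h - v) * (L * B + P)"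
    using G_bound by (simp add: mult_left_mono)
  finally show ?thesis by (simp add: mult.commute)
qed

lemma vi_gap_dissipation:
  fixes K :: "'a::euclidean_space set" and x w :: "real \<Rightarrow> 'a"
  assumes K: "K \<noteq> {}" "compact K" and lip: "L-lipschitz_on K G"
    and mono: "\<And>y z. y \<in> K \<Longrightarrow> z \<in> K \<Longrightarrow> 0 \<le> (y - z) \<bullet> (G y - G z)"
    and xK: "\<And>t. 0 \<le> t \<Longrightarrow> x t \<in> K" and x_cont: "continuous_on {0..} x"
    and N: "negligible N" and w: "\<And>a b. w integrable_on {a..b}" and w_bound: "\<And>\<tau>. norm (w \<tau>) \<le> B"
    and incr: "\<And>\<sigma> \<tau>. 0 \<le> \<sigma> \<Longrightarrow> \<sigma> \<le> \<tau> \<Longrightarrow> x \<tau> - x \<sigma> = integral {\<sigma>..\<tau>} w"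
    and best: "\<And>\<tau>. 0 \<le> \<tau> \<Longrightarrow> \<tau> \<notin> N \<Longrightarrow> x \<tau> + w \<tau> \<in> best_resp K (G (x \<tau>))"
    and st: "0 < s" "s \<le> t"
  shows "vi_gap K G (x t) - vi_gap K G (x s) + integral {s..t} (\<lambda>\<tau>. vi_gap K G (x \<tau>)) \<le> 0"
proof -
  let ?\<phi> = "\<lambda>\<tau>. vi_gap K G (x \<tau>)"
  let ?e = "\<lambda>h \<tau>. norm (integral {\<tau> - h..\<tau>} w /\<^sub>R h - w \<tau>)"
  have "bounded (G ` K)"
    by (intro compact_imp_bounded compact_continuous_image lipschitz_on_continuous_on[OF lip] K(2))
  then obtain P where P: "\<And>y. y \<in> K \<Longrightarrow> norm (G y) \<le> P" unfolding bounded_iff by blast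
  define C where "C = L * B + P"
  have quotient: "(?\<phi> \<tau> - ?\<phi> (\<tau> - h)) / h + ?\<phi> \<tau> \<le> C * ?e h \<tau>"
    if "0 < h" "h \<le> \<tau>" "\<tau> \<notin> N" for h \<tau>
  proof -
    have "0 \<le> \<tau>" "x \<tau> \<in> K" "x (\<tau> - h) \<in> K" using xK that by auto
    have avg: "(x \<tau> - x (\<tau> - h)) /\<^sub>R h = integral {\<tau> - h..\<tau>} w /\<^sub>R h"
      using incr[of "\<tau> - h" \<tau>] that by simp
    have "norm ((x \<tau> - x (\<tau> - h)) /\<^sub>R h) \<le> B"
      unfolding avg by (rule norm_backward_average_le[OF w w_bound \<open>0 < h\<close>])
    from vi_gap_backward_quotient_le_norm[OF K(2) lip P \<open>x \<tau> \<in> K\<close> \<open>x (\<tau> - h) \<in> K\<close>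
        best[OF \<open>0 \<le> \<tau>\<close> \<open>\<tau> \<notin> N\<close>] \<open>0 < h\<close> mono[OF \<open>x \<tau> \<in> K\<close> \<open>x (\<tau> - h) \<in> K\<close>] this]
    show ?thesis by (simp add: C_def avg)
  qed
  show ?thesis
  proof (rule dissipation_inequality[where q="\<lambda>h \<tau>. C * ?e h \<tau>", OF _ st N])
    show "continuous_on {0..} ?\<phi>"
      by (rule continuous_on_compose2
          [OF continuous_on_vi_gap[OF K lipschitz_on_continuous_on[OF lip]] x_cont]) (auto intro: xK)
    show "(?\<phi> \<tau> - ?\<phi> (\<tau> - h)) / h + ?\<phi> \<tau> \<le> C * ?e h \<tau>"
      if "0 < h" "h < s" "\<tau> \<in> {s..t} - N" for h \<tau>
      using quotient that by auto
    show "(\<lambda>\<tau>. C * ?e h \<tau>) integrable_on {s..t}" if "0 < h" for h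
      using integrable_on_cmult_left[OF integrable_backward_average_error[OF w w_bound that], of C]
      by simp
    show "((\<lambda>h. integral {s..t} (\<lambda>\<tau>. C * ?e h \<tau>)) \<longlongrightarrow> 0) (at_right 0)"
      using tendsto_mult_right_zero[OF integral_backward_average_error_tendsto_0[OF w w_bound]]
      by simp
  qed
qed

lemma caratheodory_sol_tendsto_solves_VI:
  fixes K :: "'a::euclidean_space set"
  assumes K: "K \<noteq> {}" "compact K" "convex K" and lip: "L-lipschitz_on K G"
    and sm: "strongly_monotone_on K G" and xt: "solves_VI K G xt" and sol: "caratheodory_sol K G x"
  shows "(x \<longlongrightarrow> xt) at_top"
proof -
  obtain c where "c > 0"
    and c: "\<And>y z. y \<in> K \<Longrightarrow> z \<in> K \<Longrightarrow> c * (norm (y - z))\<^sup>2 \<le> (y - z) \<bullet> (G y - G z)"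
    using strongly_monotone_onE[OF sm] by blast
  then have mono: "0 \<le> (y - z) \<bullet> (G y - G z)" if "y \<in> K" "z \<in> K" for y z
    by (intro order_trans[OF _ c[OF that]]) simp
  obtain w N B where N: "negligible N" and w: "\<And>a b. w integrable_on {a..b}"
    and w_bound: "\<And>\<tau>. norm (w \<tau>) \<le> B"
    and incr: "\<And>\<sigma> \<tau>. 0 \<le> \<sigma> \<Longrightarrow> \<sigma> \<le> \<tau> \<Longrightarrow> x \<tau> - x \<sigma> = integral {\<sigma>..\<tau>} w"
    and best: "\<And>\<tau>. 0 \<le> \<tau> \<Longrightarrow> \<tau> \<notin> N \<Longrightarrow> x \<tau> + w \<tau> \<in> best_resp K (G (x \<tau>))"
    and xK: "\<And>t. 0 \<le> t \<Longrightarrow> x t \<in> K" and x_cont: "continuous_on {0..} x"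
    by (rule caratheodory_sol_compact_convexE[OF sol K(2,3)]) blast
  let ?\<phi> = "\<lambda>\<tau>. vi_gap K G (x \<tau>)"
  have \<phi>_ge: "c * (norm (x t - xt))\<^sup>2 \<le> ?\<phi> t" if "0 \<le> t" for t
    by (rule vi_gap_ge_sq_dist[OF K(2) c xt xK[OF that]])
  have "(?\<phi> \<longlongrightarrow> 0) at_top"
  proof (rule dissipation_tendsto_0)
    show "continuous_on {0..} ?\<phi>"
      by (rule continuous_on_compose2
          [OF continuous_on_vi_gap[OF K(1,2) lipschitz_on_continuous_on[OF lip]] x_cont]) (auto intro: xK)
    show "0 \<le> ?\<phi> t" if "0 \<le> t" for t
      by (intro order_trans[OF _ \<phi>_ge[OF that]]) (simp add: \<open>c > 0\<close> less_imp_le)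
    show "?\<phi> t - ?\<phi> s + integral {s..t} ?\<phi> \<le> 0" if "0 < s" "s \<le> t" for s t
      by (rule vi_gap_dissipation[OF K(1,2) lip mono xK x_cont N w w_bound incr best that])
  qed
  moreover have "\<forall>\<^sub>F t in at_top. c * (norm (x t - xt))\<^sup>2 \<le> ?\<phi> t"
    using \<phi>_ge by (rule eventually_at_top_linorderI)
  ultimately show ?thesis by (rule tendsto_if_scaled_sq_dist_le[OF \<open>c > 0\<close>])
qed

theorem theorem3:
  fixes K :: "(real ^ 'n) set" and F \<delta> :: "real ^ 'n \<Rightarrow> real ^ 'n"
  assumes "K \<noteq> {}" and "compact K" and "convex K"
    and "C1_on K F" and "strongly_monotone_on K F"
    and "C1_on K (\<lambda>x. F x + \<delta> x)" and "strongly_monotone_on K (\<lambda>x. F x + \<delta> x)"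
  shows "\<exists>xt. solves_VI K (\<lambda>x. F x + \<delta> x) xt
          \<and> (\<forall>x. caratheodory_sol K (\<lambda>x. F x + \<delta> x) x \<longrightarrow> (x \<longlongrightarrow> xt) at_top)
          \<and> (\<exists>\<alpha>1. class_K_inf \<alpha>1 \<and>
               (\<forall>xs. solves_VI K F xs \<longrightarrow>
                  norm (xs - xt) \<le> inv_into {0..} \<alpha>1 (hfun K F \<delta> xt)))"
proof -
  let ?G = "\<lambda>x. F x + \<delta> x"
  obtain L where lip: "L-lipschitz_on K ?G"
    using C1_on_imp_lipschitz_on[OF assms(6,2,3)] .
  obtain xt where xt: "solves_VI K ?G xt"
    using solves_VI_exists[OF assms(1-3) lipschitz_on_continuous_on[OF lip]] .
  obtain \<alpha> where "class_K_inf \<alpha>"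
    and "\<And>xs. solves_VI K F xs \<Longrightarrow> norm (xs - xt) \<le> inv_into {0..} \<alpha> (hfun K F \<delta> xt)"
    using VI_solution_distance_bound[OF assms(1,2,5) xt] by blast
  moreover have "(x \<longlongrightarrow> xt) at_top" if "caratheodory_sol K ?G x" for x
    by (rule caratheodory_sol_tendsto_solves_VI[OF assms(1-3) lip assms(7) xt that])
  ultimately show ?thesis using xt by blast
qed

end
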